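(* Let $m,n>-1/2$, $\alpha_1,\alpha_2>0$, $0\le|\beta_i|<\alpha_i$ ($i=1,2$), let $X\sim\mathrm{VG}(m,\alpha_1,\beta_1,0)$ and $Y\sim\mathrm{VG}(n,\alpha_2,\beta_2,0)$ be independent and $Z=XY$. Then \[ \mathbb{P}(Z\le0)=P_{m,\alpha_1,\beta_1}+P_{n,\alpha_2,\beta_2}-2P_{m,\alpha_1,\beta_1}P_{n,\alpha_2,\beta_2}, \] where for $\mu>-1/2$, $0\le|\beta|<\alpha$, \[ P_{\mu,\alpha,\beta}=\frac12-\frac{\Gamma(\mu+1)}{\sqrt\pi\,\Gamma(\mu+1/2)}\frac{\beta}{\alpha}\Big(1-\frac{\beta^2}{\alpha^2}\Big)^{\mu+1/2}{}_2F_1\Big(1,\mu+1;\frac32;\frac{\beta^2}{\alpha^2}\Big). \]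
   Context: For $\mu>-1/2$, $\alpha>0$ and $0\le|\beta|<\alpha$, $\mathrm{VG}(\mu,\alpha,\beta,0)$ denotes the variance-gamma distribution on $\mathbb{R}$ with probability density function $f(x)=\frac{(\alpha^2-\beta^2)^{\mu+1/2}}{\sqrt{\pi}(2\alpha)^{\mu}\Gamma(\mu+1/2)}e^{\beta x}|x|^{\mu}K_{\mu}(\alpha|x|)$, where $K_\nu$ is the modified Bessel function of the second kind. ${}_2F_1(a,b;c;x)=\sum_{j\ge0}\frac{(a)_j(b)_j}{(c)_j}\frac{x^j}{j!}$ for $|x|<1$ is the Gaussian hypergeometric function, with $(u)_j=u(u+1)\cdots(u+j-1)$. *)

theory Defs
  imports "HOL-Probability.Probability"
begin

definition besselK :: "real \<Rightarrow> real \<Rightarrow> real" where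
  "besselK \<nu> x = (LINT t:{0..}|lborel. exp (- x * cosh t) * cosh (\<nu> * t))"

definition hyp2F1 :: "real \<Rightarrow> real \<Rightarrow> real \<Rightarrow> real \<Rightarrow> real" where
  "hyp2F1 a b c x = (\<Sum>j. pochhammer a j * pochhammer b j / pochhammer c j * x ^ j / fact j)"

definition vg_pdf :: "real \<Rightarrow> real \<Rightarrow> real \<Rightarrow> real \<Rightarrow> real" where
  "vg_pdf \<mu> \<alpha> \<beta> x =
     (\<alpha>\<^sup>2 - \<beta>\<^sup>2) powr (\<mu> + 1/2) / (sqrt pi * (2 * \<alpha>) powr \<mu> * Gamma (\<mu> + 1/2))
     * exp (\<beta> * x) * \<bar>x\<bar> powr \<mu> * besselK \<mu> (\<alpha> * \<bar>x\<bar>)"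

definition vgP :: "real \<Rightarrow> real \<Rightarrow> real \<Rightarrow> real" where
  "vgP \<mu> \<alpha> \<beta> =
     1/2 - Gamma (\<mu> + 1) / (sqrt pi * Gamma (\<mu> + 1/2)) * (\<beta> / \<alpha>)
       * (1 - \<beta>\<^sup>2 / \<alpha>\<^sup>2) powr (\<mu> + 1/2)
       * hyp2F1 1 (\<mu> + 1) (3/2) (\<beta>\<^sup>2 / \<alpha>\<^sup>2)"

end

theory Submission
  imports Defs
begin

text \<open>
  Let c = \<open>vg_const\<close> be the normalising constant of the density of VG(mu, alpha, beta, 0).
  Inserting the integral representation of K_mu and integrating in x first (a Gamma integral) gives
  P(X <= 0) = c Gamma(mu+1) N(beta) and P(X >= 0) = c Gamma(mu+1) N(-beta), where
  N(b) = int_0^oo cosh(mu t) (alpha cosh t + b)^(-mu-1) dt is \<open>vg_kernel_integral\<close>.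
  Since the two probabilities add up to 1, P(X <= 0) = 1/2 - c Gamma(mu+1) (N(-beta) - N(beta)) / 2.
  Expanding both powers binomially in beta / (alpha cosh t), only odd powers survive in the
  difference, each weighted by int_0^oo cosh(mu t) cosh(t)^(-p) dt. Integration by parts gives a
  two-step recurrence in p for these integrals, and its solution turns the series into
  2F1(1, mu+1; 3/2; beta^2/alpha^2). Finally, X and Y are independent without atoms at 0, so
  P(XY <= 0) = P(X <= 0) P(Y >= 0) + P(X >= 0) P(Y <= 0).
\<close>

lemma cosh_measurable[measurable]:
  assumes [measurable]: "f \<in> borel_measurable M"
  shows "(\<lambda>x. cosh (f x :: real)) \<in> borel_measurable M"
  unfolding cosh_def by measurable

lemma nn_integral_powr_exp_Gamma:
  fixes c s :: real
  assumes c: "c > 0" and s: "s > 0"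
  shows "(\<integral>\<^sup>+x. ennreal (indicator {0<..} x * x powr (s - 1) * exp (- c * x)) \<partial>lborel)
         = ennreal (Gamma s / c powr s)"
proof -
  let ?I = "\<integral>\<^sup>+x. ennreal (indicator {0<..} x * x powr (s - 1) * exp (- c * x)) \<partial>lborel"
  have "ennreal (Gamma s) = (\<integral>\<^sup>+t. ennreal (indicator {0..} t * t powr (s - 1) / exp t) \<partial>lborel)"
    using Gamma_conv_nn_integral_real[OF s] by simp
  also have "\<dots> = ennreal \<bar>c\<bar> * (\<integral>\<^sup>+x. ennreal (indicator {0..} (0 + c * x) * (0 + c * x) powr (s - 1) / exp (0 + c * x)) \<partial>lborel)"
    by (rule nn_integral_real_affine) (use c in auto)
  also have "\<dots> = ennreal c * (\<integral>\<^sup>+x. ennreal (c powr (s - 1)) * ennreal (indicator {0<..} x * x powr (s - 1) * exp (- c * x)) \<partial>lborel)"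
  proof -
    have "ennreal (indicator {0..} (0 + c * x) * (0 + c * x) powr (s - 1) / exp (0 + c * x))
        = ennreal (c powr (s - 1)) * ennreal (indicator {0<..} x * x powr (s - 1) * exp (- c * x))" for x
    proof (cases "x > 0")
      case True
      have "(c * x) powr (s - 1) / exp (c * x) = c powr (s - 1) * (x powr (s - 1) * exp (- c * x))"
        using c True by (simp add: powr_mult exp_minus divide_inverse)
      then show ?thesis using c True
        by (simp add: ennreal_mult'[symmetric] indicator_def)
    qed (use c in \<open>auto simp: indicator_def zero_le_mult_iff\<close>)
    then show ?thesis using c by simp
  qed
  also have "\<dots> = ennreal c * ennreal (c powr (s - 1)) * ?I"
    by (subst nn_integral_cmult) (auto simp: mult.assoc)
  also have "ennreal c * ennreal (c powr (s - 1)) = ennreal (c powr s)"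
    using c by (simp add: ennreal_mult'[symmetric] powr_diff)
  finally have eq: "ennreal (Gamma s) = ennreal (c powr s) * ?I" .
  have "ennreal (Gamma s / c powr s) = ennreal (Gamma s) / ennreal (c powr s)"
    using c Gamma_real_pos[OF s] by (simp add: divide_ennreal)
  also have "\<dots> = ?I"
    unfolding eq using c ennreal_mult_divide_eq[of "ennreal (c powr s)" ?I] by (simp add: mult.commute)
  finally show ?thesis ..
qed

lemma cosh_le_exp_abs: "cosh x \<le> exp \<bar>x :: real\<bar>"
proof -
  have "exp x \<le> exp \<bar>x\<bar>" "exp (- x) \<le> exp \<bar>x\<bar>" by auto
  from add_mono[OF this] show ?thesis unfolding cosh_field_def by simp
qed

lemma cosh_powr_neg_le:
  fixes t p :: real
  assumes "p \<ge> 0"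
  shows "cosh t powr (- p) \<le> 2 powr p * exp (- p * t)"
proof -
  have "exp t / 2 \<le> cosh t" unfolding cosh_def by (simp add: divide_right_mono)
  then have "cosh t powr (- p) \<le> (exp t / 2) powr (- p)"
    using assms by (intro powr_mono2') auto
  also have "\<dots> = 2 powr p * exp (- p * t)"
    by (simp only: powr_divide exp_powr_real powr_minus) (simp add: divide_inverse mult_ac exp_minus)
  finally show ?thesis .
qed

definition cosh_sech :: "real \<Rightarrow> real \<Rightarrow> real \<Rightarrow> real" where
  "cosh_sech \<mu> p t = cosh (\<mu> * t) * cosh t powr (- p)"

definition cosh_sech_integral :: "real \<Rightarrow> real \<Rightarrow> real" where
  "cosh_sech_integral \<mu> p = (LINT t:{0<..}|lborel. cosh_sech \<mu> p t)"

lemma cosh_sech_measurable[measurable]: "cosh_sech \<mu> p \<in> borel_measurable borel"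
  unfolding cosh_sech_def by measurable

lemma cosh_sech_nonneg: "cosh_sech \<mu> p t \<ge> 0"
  unfolding cosh_sech_def by simp

lemma cosh_sech_le:
  assumes "t \<ge> 0" "p \<ge> 0"
  shows "cosh_sech \<mu> p t \<le> 2 powr p * exp (- (p - \<bar>\<mu>\<bar>) * t)"
proof -
  have "cosh (\<mu> * t) \<le> exp (\<bar>\<mu>\<bar> * t)"
    using cosh_le_exp_abs[of "\<mu> * t"] assms(1) by (simp add: abs_mult)
  then have "cosh_sech \<mu> p t \<le> exp (\<bar>\<mu>\<bar> * t) * (2 powr p * exp (- p * t))"
    unfolding cosh_sech_def using cosh_powr_neg_le[OF assms(2)] by (intro mult_mono) auto
  also have "\<dots> = 2 powr p * exp (- (p - \<bar>\<mu>\<bar>) * t)"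
    by (simp add: exp_add[symmetric] algebra_simps)
  finally show ?thesis .
qed

lemma nn_integral_cosh_sech_finite:
  assumes "p > \<bar>\<mu>\<bar>"
  shows "(\<integral>\<^sup>+t. ennreal (indicator {0<..} t * cosh_sech \<mu> p t) \<partial>lborel) < \<infinity>"
proof -
  have "(\<integral>\<^sup>+t. ennreal (indicator {0<..} t * cosh_sech \<mu> p t) \<partial>lborel)
      \<le> (\<integral>\<^sup>+t. ennreal (2 powr p) * ennreal (indicator {0<..} t * t powr (1 - 1) * exp (- (p - \<bar>\<mu>\<bar>) * t)) \<partial>lborel)"
    using cosh_sech_le[of _ p \<mu>] assms
    by (intro nn_integral_mono) (auto simp: ennreal_mult'[symmetric] indicator_def)
  also have "\<dots> = ennreal (2 powr p) * ennreal (Gamma 1 / (p - \<bar>\<mu>\<bar>) powr 1)"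
    using assms nn_integral_powr_exp_Gamma[of "p - \<bar>\<mu>\<bar>" 1] by (subst nn_integral_cmult) auto
  also have "\<dots> < \<infinity>" by (simp add: ennreal_mult_less_top)
  finally show ?thesis .
qed

lemma set_integrable_cosh_sech:
  assumes "p > \<bar>\<mu>\<bar>"
  shows "set_integrable lborel {0<..} (cosh_sech \<mu> p)"
  unfolding set_integrable_def
  using nn_integral_cosh_sech_finite[OF assms]
  by (intro integrableI_bounded) (auto simp: abs_mult cosh_sech_nonneg)

lemma nn_integral_cosh_sech:
  assumes "p > \<bar>\<mu>\<bar>"
  shows "(\<integral>\<^sup>+t. ennreal (indicator {0<..} t * cosh_sech \<mu> p t) \<partial>lborel) = ennreal (cosh_sech_integral \<mu> p)"
proof -
  have "integrable lborel (\<lambda>t. indicator {0<..} t * cosh_sech \<mu> p t)"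
    using set_integrable_cosh_sech[OF assms] unfolding set_integrable_def by simp
  then show ?thesis
    unfolding cosh_sech_integral_def set_lebesgue_integral_def
    by (simp add: nn_integral_eq_integral cosh_sech_nonneg)
qed

lemma cosh_sech_integral_nonneg: "cosh_sech_integral \<mu> p \<ge> 0"
  unfolding cosh_sech_integral_def set_lebesgue_integral_def
  by (intro Bochner_Integration.integral_nonneg) (auto simp: cosh_sech_nonneg)

lemma exp_neg_le_power:
  fixes y :: real
  assumes "y > 0"
  shows "exp (- y) \<le> (real N / y) ^ N"
proof (cases "N = 0")
  case False
  have "(y / real N) ^ N \<le> (1 + y / real N) ^ N"
    using assms by (intro power_mono) auto
  also have "\<dots> \<le> exp y"
    using assms False by (intro exp_ge_one_plus_x_over_n_power_n) auto
  finally have "inverse (exp y) \<le> inverse ((y / real N) ^ N)"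
    using assms False by (intro le_imp_inverse_le) auto
  then show ?thesis by (simp add: exp_minus power_divide inverse_divide)
qed (use assms in simp)

lemma nn_integral_besselK:
  fixes a \<mu> :: real
  assumes a: "a > 0"
  shows "(\<integral>\<^sup>+t. ennreal (indicator {0<..} t * (exp (- a * cosh t) * cosh (\<mu> * t))) \<partial>lborel)
         = ennreal (besselK \<mu> a)"
proof -
  define N :: nat where "N = nat \<lceil>\<bar>\<mu>\<bar>\<rceil> + 1"
  have N: "real N > \<bar>\<mu>\<bar>" unfolding N_def by linarith
  define K where "K = (real N / a) ^ N"
  have K: "K \<ge> 0" using a by (simp add: K_def)
  have bound: "exp (- a * cosh t) * cosh (\<mu> * t) \<le> K * cosh_sech \<mu> (real N) t" for t
  proof -
    have "exp (- (a * cosh t)) \<le> (real N / (a * cosh t)) ^ N"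
      using a by (intro exp_neg_le_power) simp
    also have "\<dots> = K * cosh t powr (- real N)"
      using a cosh_real_pos[of t]
      by (simp add: K_def power_divide powr_minus powr_realpow power_mult_distrib field_simps)
    finally show ?thesis
      unfolding cosh_sech_def by (simp add: mult_right_mono mult.assoc)
  qed
  let ?f = "\<lambda>t. indicator {0<..} t * (exp (- a * cosh t) * cosh (\<mu> * t))"
  have "(\<integral>\<^sup>+t. ennreal (?f t) \<partial>lborel)
      \<le> (\<integral>\<^sup>+t. ennreal K * ennreal (indicator {0<..} t * cosh_sech \<mu> (real N) t) \<partial>lborel)"
    using bound K by (intro nn_integral_mono) (auto simp: indicator_def ennreal_mult'[symmetric] intro!: ennreal_leI)
  also have "\<dots> < \<infinity>"
    using nn_integral_cosh_sech_finite[OF N] by (subst nn_integral_cmult) (auto simp: ennreal_mult_less_top)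
  finally have fin: "(\<integral>\<^sup>+t. ennreal (?f t) \<partial>lborel) < \<infinity>" .
  have int: "integrable lborel ?f"
    using fin by (intro integrableI_bounded) (auto simp: abs_mult)
  have "besselK \<mu> a = (\<integral>t. ?f t \<partial>lborel)"
    unfolding besselK_def set_lebesgue_integral_def
    by (intro integral_cong_AE) (auto intro: eventually_mono[OF AE_lborel_singleton[of 0]] simp: indicator_def)
  then show ?thesis
    using int by (simp add: nn_integral_eq_integral)
qed

lemma besselK_measurable[measurable]:
  assumes [measurable]: "f \<in> borel_measurable M"
  shows "(\<lambda>x. besselK \<mu> (f x)) \<in> borel_measurable M"
  unfolding besselK_def set_lebesgue_integral_def by measurable

definition vg_const :: "real \<Rightarrow> real \<Rightarrow> real \<Rightarrow> real" where
  "vg_const \<mu> \<alpha> \<beta> = (\<alpha>\<^sup>2 - \<beta>\<^sup>2) powr (\<mu> + 1/2) / (sqrt pi * (2 * \<alpha>) powr \<mu> * Gamma (\<mu> + 1/2))"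

definition vg_kernel_integral :: "real \<Rightarrow> real \<Rightarrow> real \<Rightarrow> ennreal" where
  "vg_kernel_integral \<mu> \<alpha> \<beta> =
     (\<integral>\<^sup>+t. ennreal (indicator {0<..} t * cosh (\<mu> * t) * (\<alpha> * cosh t + \<beta>) powr (- (\<mu> + 1))) \<partial>lborel)"

lemma vg_pdf_measurable[measurable]: "vg_pdf \<mu> \<alpha> \<beta> \<in> borel_measurable borel"
  unfolding vg_pdf_def by measurable

lemma vg_const_uminus: "vg_const \<mu> \<alpha> (- \<beta>) = vg_const \<mu> \<alpha> \<beta>"
  unfolding vg_const_def by simp

lemma vg_const_pos:
  assumes "\<mu> > -1/2" "\<alpha> > 0" "\<bar>\<beta>\<bar> < \<alpha>"
  shows "vg_const \<mu> \<alpha> \<beta> > 0"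
proof -
  have "\<beta>\<^sup>2 < \<alpha>\<^sup>2"
    using assms by (metis abs_ge_zero power2_abs power_strict_mono zero_less_numeral)
  then show ?thesis
    unfolding vg_const_def using assms by (intro divide_pos_pos mult_pos_pos) (auto intro!: Gamma_real_pos)
qed

lemma vg_pdf_neg:
  "x > 0 \<Longrightarrow> vg_pdf \<mu> \<alpha> \<beta> (- x) = vg_const \<mu> \<alpha> \<beta> * exp (- \<beta> * x) * x powr \<mu> * besselK \<mu> (\<alpha> * x)"
  unfolding vg_pdf_def vg_const_def by simp

lemma vg_pdf_uminus: "vg_pdf \<mu> \<alpha> \<beta> (- x) = vg_pdf \<mu> \<alpha> (- \<beta>) x"
  unfolding vg_pdf_def by simp

text \<open>Joint integrand in \<open>(x, t)\<close> obtained by inserting the integral representation of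
  \<open>K\<^sub>\<mu>\<close> into the density at \<open>-x\<close>.\<close>

definition vg_neg_integrand :: "real \<Rightarrow> real \<Rightarrow> real \<Rightarrow> real \<Rightarrow> real \<Rightarrow> real" where
  "vg_neg_integrand \<mu> \<alpha> \<beta> x t = indicator {0<..} x * vg_const \<mu> \<alpha> \<beta> * exp (- \<beta> * x) * x powr \<mu>
     * (indicator {0<..} t * (exp (- (\<alpha> * x) * cosh t) * cosh (\<mu> * t)))"

lemma nn_integral_vg_neg_integrand_t:
  assumes "\<mu> > -1/2" "\<alpha> > 0" "\<bar>\<beta>\<bar> < \<alpha>"
  shows "(\<integral>\<^sup>+t. ennreal (vg_neg_integrand \<mu> \<alpha> \<beta> x t) \<partial>lborel)
         = ennreal (indicator {0<..} x * vg_pdf \<mu> \<alpha> \<beta> (- x))"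
proof (cases "x > 0")
  case True
  define A where "A = vg_const \<mu> \<alpha> \<beta> * exp (- \<beta> * x) * x powr \<mu>"
  have A: "A \<ge> 0" unfolding A_def using vg_const_pos[OF assms] by simp
  have "(\<integral>\<^sup>+t. ennreal (vg_neg_integrand \<mu> \<alpha> \<beta> x t) \<partial>lborel)
      = (\<integral>\<^sup>+t. ennreal A * ennreal (indicator {0<..} t * (exp (- (\<alpha> * x) * cosh t) * cosh (\<mu> * t))) \<partial>lborel)"
    using True A by (simp add: vg_neg_integrand_def A_def ennreal_mult'[symmetric] mult.assoc)
  also have "\<dots> = ennreal A * ennreal (besselK \<mu> (\<alpha> * x))"
    using nn_integral_besselK[of "\<alpha> * x" \<mu>] True assms(2) by (subst nn_integral_cmult) auto
  also have "\<dots> = ennreal (indicator {0<..} x * vg_pdf \<mu> \<alpha> \<beta> (- x))"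
    using True A by (simp add: vg_pdf_neg A_def ennreal_mult'[symmetric])
  finally show ?thesis .
qed (simp add: vg_neg_integrand_def)

lemma nn_integral_vg_neg_integrand_x:
  assumes mu: "\<mu> > -1/2" and al: "\<alpha> > 0" and be: "\<bar>\<beta>\<bar> < \<alpha>"
  shows "(\<integral>\<^sup>+x. ennreal (vg_neg_integrand \<mu> \<alpha> \<beta> x t) \<partial>lborel) = ennreal (vg_const \<mu> \<alpha> \<beta> * Gamma (\<mu> + 1))
      * ennreal (indicator {0<..} t * cosh (\<mu> * t) * (\<alpha> * cosh t + \<beta>) powr (- (\<mu> + 1)))"
proof -
  define C where "C = vg_const \<mu> \<alpha> \<beta>"
  have C: "C \<ge> 0" unfolding C_def using vg_const_pos[OF mu al be] by simp
  define c where "c = \<alpha> * cosh t + \<beta>"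
  have "\<alpha> \<le> \<alpha> * cosh t" using al cosh_real_ge_1[of t] by simp
  then have c: "c > 0" using be unfolding c_def by linarith
  have g: "Gamma (\<mu> + 1) > 0" using mu by (intro Gamma_real_pos) simp
  have "vg_neg_integrand \<mu> \<alpha> \<beta> x t
      = indicator {0<..} t * cosh (\<mu> * t) * C * (indicator {0<..} x * x powr (\<mu> + 1 - 1) * exp (- c * x))" for x
    unfolding vg_neg_integrand_def by (simp add: C_def c_def exp_add[symmetric] algebra_simps)
  then have "(\<integral>\<^sup>+x. ennreal (vg_neg_integrand \<mu> \<alpha> \<beta> x t) \<partial>lborel) = ennreal (indicator {0<..} t * cosh (\<mu> * t) * C)
      * (\<integral>\<^sup>+x. ennreal (indicator {0<..} x * x powr (\<mu> + 1 - 1) * exp (- c * x)) \<partial>lborel)"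
    using C by (simp add: nn_integral_cmult ennreal_mult' indicator_def)
  also have "\<dots> = ennreal (indicator {0<..} t * cosh (\<mu> * t) * C) * ennreal (Gamma (\<mu> + 1) / c powr (\<mu> + 1))"
    using nn_integral_powr_exp_Gamma[OF c, of "\<mu> + 1"] mu by simp
  also have "\<dots> = ennreal (C * Gamma (\<mu> + 1)) * ennreal (indicator {0<..} t * cosh (\<mu> * t) * c powr (- (\<mu> + 1)))"
    unfolding powr_minus[of c] using C g
    by (simp add: ennreal_mult'[symmetric] divide_inverse mult_ac indicator_def)
  finally show ?thesis by (simp add: C_def c_def)
qed

lemma nn_integral_vg_pdf_neg:
  fixes \<mu> \<alpha> \<beta> :: real
  assumes "\<mu> > -1/2" "\<alpha> > 0" "\<bar>\<beta>\<bar> < \<alpha>"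
  shows "(\<integral>\<^sup>+x. ennreal (indicator {0<..} x * vg_pdf \<mu> \<alpha> \<beta> (- x)) \<partial>lborel)
         = ennreal (vg_const \<mu> \<alpha> \<beta> * Gamma (\<mu> + 1)) * vg_kernel_integral \<mu> \<alpha> \<beta>"
proof -
  have [measurable]: "(\<lambda>(x, t). vg_neg_integrand \<mu> \<alpha> \<beta> x t) \<in> borel_measurable (lborel \<Otimes>\<^sub>M lborel)"
    unfolding vg_neg_integrand_def by measurable
  have "(\<integral>\<^sup>+x. ennreal (indicator {0<..} x * vg_pdf \<mu> \<alpha> \<beta> (- x)) \<partial>lborel)
      = (\<integral>\<^sup>+x. \<integral>\<^sup>+t. ennreal (vg_neg_integrand \<mu> \<alpha> \<beta> x t) \<partial>lborel \<partial>lborel)"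
    unfolding nn_integral_vg_neg_integrand_t[OF assms] ..
  also have "\<dots> = (\<integral>\<^sup>+t. \<integral>\<^sup>+x. ennreal (vg_neg_integrand \<mu> \<alpha> \<beta> x t) \<partial>lborel \<partial>lborel)"
    by (rule lborel_pair.Fubini') measurable
  also have "\<dots> = ennreal (vg_const \<mu> \<alpha> \<beta> * Gamma (\<mu> + 1)) * vg_kernel_integral \<mu> \<alpha> \<beta>"
    unfolding nn_integral_vg_neg_integrand_x[OF assms] vg_kernel_integral_def
    by (rule nn_integral_cmult) measurable
  finally show ?thesis .
qed

lemma nn_integral_vg_pdf_nonpos:
  fixes \<mu> \<alpha> \<beta> :: real
  assumes "\<mu> > -1/2" "\<alpha> > 0" "\<bar>\<beta>\<bar> < \<alpha>"
  shows "(\<integral>\<^sup>+x. ennreal (vg_pdf \<mu> \<alpha> \<beta> x) * indicator {..0} x \<partial>lborel)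
         = ennreal (vg_const \<mu> \<alpha> \<beta> * Gamma (\<mu> + 1)) * vg_kernel_integral \<mu> \<alpha> \<beta>"
proof -
  let ?f = "\<lambda>x. ennreal (vg_pdf \<mu> \<alpha> \<beta> x)"
  have "(\<integral>\<^sup>+x. ?f x * indicator {..0} x \<partial>lborel) = (\<integral>\<^sup>+x. ?f x * indicator {..<0} x \<partial>lborel)"
    by (intro nn_integral_cong_AE eventually_mono[OF AE_lborel_singleton[of 0]]) (auto simp: indicator_def)
  also have "\<dots> = ennreal \<bar>- 1\<bar> * (\<integral>\<^sup>+x. ?f (0 + (- 1) * x) * indicator {..<0} (0 + (- 1) * x) \<partial>lborel)"
    by (rule nn_integral_real_affine) auto
  also have "\<dots> = (\<integral>\<^sup>+x. ?f (- x) * indicator {..<0} (- x) \<partial>lborel)"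
    by simp
  also have "\<dots> = (\<integral>\<^sup>+x. ennreal (indicator {0<..} x * vg_pdf \<mu> \<alpha> \<beta> (- x)) \<partial>lborel)"
    by (intro nn_integral_cong) (auto simp: indicator_def)
  finally show ?thesis using nn_integral_vg_pdf_neg[OF assms] by simp
qed

lemma nn_integral_vg_pdf_nonneg:
  fixes \<mu> \<alpha> \<beta> :: real
  assumes "\<mu> > -1/2" "\<alpha> > 0" "\<bar>\<beta>\<bar> < \<alpha>"
  shows "(\<integral>\<^sup>+x. ennreal (vg_pdf \<mu> \<alpha> \<beta> x) * indicator {0..} x \<partial>lborel)
         = ennreal (vg_const \<mu> \<alpha> \<beta> * Gamma (\<mu> + 1)) * vg_kernel_integral \<mu> \<alpha> (- \<beta>)"
proof -
  have "(\<integral>\<^sup>+x. ennreal (vg_pdf \<mu> \<alpha> \<beta> x) * indicator {0..} x \<partial>lborel)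
      = (\<integral>\<^sup>+x. ennreal (indicator {0<..} x * vg_pdf \<mu> \<alpha> (- \<beta>) (- x)) \<partial>lborel)"
    by (intro nn_integral_cong_AE eventually_mono[OF AE_lborel_singleton[of 0]])
       (auto simp: indicator_def vg_pdf_uminus)
  also have "\<dots> = ennreal (vg_const \<mu> \<alpha> \<beta> * Gamma (\<mu> + 1)) * vg_kernel_integral \<mu> \<alpha> (- \<beta>)"
    using nn_integral_vg_pdf_neg[of \<mu> \<alpha> "- \<beta>"] assms by (simp add: vg_const_uminus)
  finally show ?thesis .
qed

lemma set_integral_Ioi_FTC:
  fixes G f :: "real \<Rightarrow> real"
  assumes deriv: "\<And>t. (G has_real_derivative f t) (at t)"
    and cont: "\<And>t. isCont f t"
    and int: "set_integrable lborel {0<..} f"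
    and lim: "(G \<longlongrightarrow> L) at_top"
  shows "(LINT t:{0<..}|lborel. f t) = L - G 0"
proof -
  have "isCont G 0" using deriv by (rule DERIV_isCont)
  then have "(G \<longlongrightarrow> G 0) (at_right 0)"
    by (simp add: isCont_def filterlim_at_split)
  then have A: "((G \<circ> real_of_ereal) \<longlongrightarrow> G 0) (at_right 0)"
    unfolding zero_ereal_def ereal_tendsto_simps1 .
  have B: "((G \<circ> real_of_ereal) \<longlongrightarrow> L) (at_left \<infinity>)"
    unfolding ereal_tendsto_simps1 by (rule lim)
  have "(LBINT t=0..\<infinity>. f t) = L - G 0"
    using deriv cont int A B
    by (intro interval_integral_FTC_integrable)
       (auto simp: has_real_derivative_iff_has_vector_derivative zero_ereal_def)
  then show ?thesis by (simp add: interval_lebesgue_integral_0_infty)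
qed

lemma tendsto_exp_neg_mult_at_top:
  assumes "(c::real) > 0"
  shows "((\<lambda>t. exp (- c * t)) \<longlongrightarrow> 0) at_top"
proof -
  have "LIM t at_top. c * t :> at_top"
    using assms by (intro filterlim_tendsto_pos_mult_at_top[OF tendsto_const] filterlim_ident)
  then have "LIM t at_top. - c * t :> at_bot"
    by (simp add: filterlim_uminus_at_bot)
  then show ?thesis by (rule filterlim_compose[OF exp_at_bot])
qed

lemma DERIV_cosh_powr: "((\<lambda>t. cosh t powr r) has_real_derivative (r * cosh t powr (r - 1) * sinh t)) (at t)"
proof -
  have "DERIV cosh t :> sinh t" using has_field_derivative_cosh[OF DERIV_ident] by simp
  from DERIV_fun_powr[OF this cosh_real_pos, of r] show ?thesis by simp
qed

lemma isCont_cosh_sech: "isCont (cosh_sech \<mu> p) t"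
  unfolding cosh_sech_def by (intro continuous_intros) auto

lemma cosh_powr_eq_mult: "q = r + 1 \<Longrightarrow> cosh t powr q = cosh t * cosh t powr (r :: real)"
  by (simp add: powr_add)

lemma abs_sinh_le_cosh: "\<bar>sinh x\<bar> \<le> cosh (x :: real)"
  using sinh_le_cosh_real[of x] sinh_le_cosh_real[of "- x"] by (cases "x \<ge> 0") auto

lemma DERIV_sinh_mult_cosh_powr:
  "((\<lambda>t. sinh ((\<mu> + 1) * t) * cosh t powr (- (\<mu> + 1)))
     has_real_derivative (\<mu> + 1) * cosh_sech \<mu> (\<mu> + 2) t) (at t)"
proof -
  define a where "a = \<mu> + 1"
  have "((\<lambda>t. sinh (a * t) * cosh t powr (- a)) has_real_derivative cosh (a * t) * a * cosh t powr (- a)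
      + sinh (a * t) * (- a * cosh t powr (- a - 1) * sinh t)) (at t)"
    by (intro derivative_eq_intros DERIV_cosh_powr) auto
  moreover have "cosh t powr (- a) = cosh t * cosh t powr (- (\<mu> + 2))"
    by (rule cosh_powr_eq_mult) (simp add: a_def)
  moreover have "cosh t powr (- a - 1) = cosh t powr (- (\<mu> + 2))"
    by (rule arg_cong[where f="(powr) (cosh t)"]) (simp add: a_def)
  moreover have "cosh (a * t) * cosh t - sinh (a * t) * sinh t = cosh (\<mu> * t)"
    using cosh_diff[of "a * t" t] by (simp add: a_def algebra_simps)
  ultimately show ?thesis
    unfolding cosh_sech_def a_def[symmetric] by (elim DERIV_cong) algebra
qed

lemma tendsto_sinh_mult_cosh_powr:
  assumes a: "(a :: real) > 0"
  shows "((\<lambda>t. sinh (a * t) * cosh t powr (- a)) \<longlongrightarrow> 2 powr (a - 1)) at_top"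
proof -
  have eq: "sinh (a * t) * cosh t powr (- a)
      = 2 powr (a - 1) * (1 - exp (- (2 * a) * t)) * (1 + exp (- 2 * t)) powr (- a)" for t
  proof -
    have sh: "sinh (a * t) = exp (a * t) * (1 - exp (- (2 * a) * t)) / 2"
      by (simp add: sinh_field_def algebra_simps exp_add[symmetric])
    have ch: "cosh t = exp t * ((1 + exp (- 2 * t)) / 2)"
      by (simp add: cosh_field_def algebra_simps exp_add[symmetric])
    have "cosh t powr (- a) = exp t powr (- a) * ((1 + exp (- 2 * t)) / 2) powr (- a)"
      unfolding ch by (rule powr_mult)
    also have "\<dots> = exp (- a * t) * ((1 + exp (- 2 * t)) powr (- a) * 2 powr a)"
      by (simp only: exp_powr_real powr_divide powr_minus) (simp add: divide_inverse mult_ac exp_minus)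
    finally have "sinh (a * t) * cosh t powr (- a) = (exp (a * t) * exp (- a * t))
        * (1 - exp (- (2 * a) * t)) * (1 + exp (- 2 * t)) powr (- a) * (2 powr a / 2)"
      unfolding sh by (simp add: mult_ac)
    also have "exp (a * t) * exp (- a * t) = 1" by (simp add: exp_add[symmetric])
    also have "2 powr a / 2 = 2 powr (a - 1)" by (simp add: powr_diff)
    finally show ?thesis by (simp add: mult_ac)
  qed
  have "((\<lambda>t. 2 powr (a - 1) * (1 - exp (- (2 * a) * t)) * (1 + exp (- 2 * t)) powr (- a))
      \<longlongrightarrow> 2 powr (a - 1) * (1 - 0) * (1 + 0) powr (- a)) at_top"
    using a by (intro tendsto_intros tendsto_exp_neg_mult_at_top) auto
  then show ?thesis unfolding eq by simp
qed

lemma cosh_sech_integral_base: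
  assumes "\<mu> > -1"
  shows "cosh_sech_integral \<mu> (\<mu> + 2) = 2 powr \<mu> / (\<mu> + 1)"
proof -
  have int: "set_integrable lborel {0<..} (\<lambda>t. (\<mu> + 1) * cosh_sech \<mu> (\<mu> + 2) t)"
    using assms by (intro set_integrable_mult_right set_integrable_cosh_sech) auto
  have lim: "((\<lambda>t. sinh ((\<mu> + 1) * t) * cosh t powr (- (\<mu> + 1))) \<longlongrightarrow> 2 powr (\<mu> + 1 - 1)) at_top"
    using assms by (intro tendsto_sinh_mult_cosh_powr) simp
  have "(LINT t:{0<..}|lborel. (\<mu> + 1) * cosh_sech \<mu> (\<mu> + 2) t) = 2 powr (\<mu> + 1 - 1) - 0"
    using set_integral_Ioi_FTC[OF DERIV_sinh_mult_cosh_powr _ int lim] isCont_cosh_sech by simp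
  then have "(\<mu> + 1) * cosh_sech_integral \<mu> (\<mu> + 2) = 2 powr \<mu>"
    unfolding cosh_sech_integral_def by simp
  then show ?thesis using assms by (simp add: field_simps)
qed

text \<open>Integration by parts: this primitive vanishes at \<open>0\<close> and at infinity, which yields
  the recurrence \<open>cosh_sech_integral_rec\<close>.\<close>

definition cosh_sech_primitive :: "real \<Rightarrow> real \<Rightarrow> real \<Rightarrow> real" where
  "cosh_sech_primitive \<mu> p t =
     - (p * cosh (\<mu> * t) * sinh t * cosh t powr (- p - 1) + \<mu> * sinh (\<mu> * t) * cosh t powr (- p))"

lemma DERIV_cosh_sech_primitive:
  "(cosh_sech_primitive \<mu> p has_real_derivative
     (p\<^sup>2 - \<mu>\<^sup>2) * cosh_sech \<mu> p t - p * (p + 1) * cosh_sech \<mu> (p + 2) t) (at t)"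
proof -
  define P where "P = cosh t powr (- (p + 2))"
  have e1: "cosh t powr (- p - 1) = cosh t * P"
    unfolding P_def by (rule cosh_powr_eq_mult) simp
  have e0: "cosh t powr (- p) = cosh t * (cosh t * P)"
    unfolding e1[symmetric] by (rule cosh_powr_eq_mult) simp
  have e2: "cosh t powr (- p - 1 - 1) = P"
    unfolding P_def by (rule arg_cong[where f="(powr) (cosh t)"]) simp
  have "(cosh_sech_primitive \<mu> p has_real_derivative
      - (((sinh (\<mu> * t) * \<mu> * p) * sinh t + p * cosh (\<mu> * t) * cosh t) * cosh t powr (- p - 1)
          + p * cosh (\<mu> * t) * sinh t * ((- p - 1) * cosh t powr (- p - 1 - 1) * sinh t)
        + ((cosh (\<mu> * t) * \<mu> * \<mu>) * cosh t powr (- p)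
          + \<mu> * sinh (\<mu> * t) * (- p * cosh t powr (- p - 1) * sinh t)))) (at t)"
    unfolding cosh_sech_primitive_def[abs_def] by (intro derivative_eq_intros DERIV_cosh_powr) auto
  moreover have "cosh t ^ 2 = sinh t ^ 2 + 1" by (rule cosh_square_eq)
  ultimately show ?thesis
    unfolding cosh_sech_def P_def[symmetric] e0 e1 e2 by (elim DERIV_cong) algebra
qed

lemma abs_cosh_sech_primitive_le:
  assumes t: "t \<ge> 0" and p: "p \<ge> 0"
  shows "\<bar>cosh_sech_primitive \<mu> p t\<bar> \<le> (p + \<bar>\<mu>\<bar>) * cosh_sech \<mu> p t"
proof -
  have "sinh t * cosh t powr (- p - 1) \<le> cosh t * cosh t powr (- p - 1)"
    by (intro mult_right_mono sinh_le_cosh_real) auto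
  also have "\<dots> = cosh t powr (- p)"
    by (rule cosh_powr_eq_mult[symmetric]) simp
  finally have "p * cosh (\<mu> * t) * (sinh t * cosh t powr (- p - 1)) \<le> p * cosh (\<mu> * t) * cosh t powr (- p)"
    using p by (intro mult_left_mono) auto
  moreover have "sinh t \<ge> 0" using t by simp
  ultimately have "\<bar>p * cosh (\<mu> * t) * sinh t * cosh t powr (- p - 1)\<bar> \<le> p * cosh_sech \<mu> p t"
    using p unfolding cosh_sech_def by (simp add: abs_mult mult_ac)
  moreover have "\<bar>\<mu> * sinh (\<mu> * t) * cosh t powr (- p)\<bar> \<le> \<bar>\<mu>\<bar> * cosh_sech \<mu> p t"
    using abs_sinh_le_cosh[of "\<mu> * t"] unfolding cosh_sech_def
    by (simp add: abs_mult mult.assoc mult_left_mono mult_right_mono)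
  ultimately show ?thesis
    unfolding cosh_sech_primitive_def by (simp add: algebra_simps)
qed

lemma tendsto_cosh_sech_primitive:
  assumes p: "p > \<bar>\<mu>\<bar>"
  shows "(cosh_sech_primitive \<mu> p \<longlongrightarrow> 0) at_top"
proof (rule Lim_null_comparison)
  have bound: "norm (cosh_sech_primitive \<mu> p t) \<le> (p + \<bar>\<mu>\<bar>) * 2 powr p * exp (- (p - \<bar>\<mu>\<bar>) * t)"
    if "t > 0" for t
  proof -
    have "norm (cosh_sech_primitive \<mu> p t) \<le> (p + \<bar>\<mu>\<bar>) * cosh_sech \<mu> p t"
      using abs_cosh_sech_primitive_le[of t p \<mu>] that p by simp
    also have "\<dots> \<le> (p + \<bar>\<mu>\<bar>) * (2 powr p * exp (- (p - \<bar>\<mu>\<bar>) * t))"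
      using cosh_sech_le[of t p \<mu>] p that by (intro mult_left_mono) auto
    finally show ?thesis by (simp add: mult_ac)
  qed
  show "\<forall>\<^sub>F t in at_top. norm (cosh_sech_primitive \<mu> p t) \<le> (p + \<bar>\<mu>\<bar>) * 2 powr p * exp (- (p - \<bar>\<mu>\<bar>) * t)"
    using eventually_gt_at_top[of 0] by eventually_elim (rule bound)
  show "((\<lambda>t. (p + \<bar>\<mu>\<bar>) * 2 powr p * exp (- (p - \<bar>\<mu>\<bar>) * t)) \<longlongrightarrow> 0) at_top"
    using p by (intro tendsto_mult_right_zero tendsto_exp_neg_mult_at_top) simp
qed

lemma cosh_sech_integral_rec:
  assumes p: "p > \<bar>\<mu>\<bar>"
  shows "p * (p + 1) * cosh_sech_integral \<mu> (p + 2) = (p\<^sup>2 - \<mu>\<^sup>2) * cosh_sech_integral \<mu> p"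
proof -
  define f where "f t = (p\<^sup>2 - \<mu>\<^sup>2) * cosh_sech \<mu> p t - p * (p + 1) * cosh_sech \<mu> (p + 2) t" for t
  have int: "set_integrable lborel {0<..} f"
    unfolding f_def using p by (intro set_integral_diff(1) set_integrable_mult_right set_integrable_cosh_sech) auto
  have "isCont f t" for t
    unfolding f_def by (intro continuous_intros isCont_cosh_sech)
  moreover have "(cosh_sech_primitive \<mu> p has_real_derivative f t) (at t)" for t
    unfolding f_def by (rule DERIV_cosh_sech_primitive)
  ultimately have "(LINT t:{0<..}|lborel. f t) = 0"
    using set_integral_Ioi_FTC[OF _ _ int tendsto_cosh_sech_primitive[OF p]]
    by (simp add: cosh_sech_primitive_def)
  moreover have "(LINT t:{0<..}|lborel. f t)
      = (p\<^sup>2 - \<mu>\<^sup>2) * cosh_sech_integral \<mu> p - p * (p + 1) * cosh_sech_integral \<mu> (p + 2)"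
    unfolding f_def cosh_sech_integral_def using p
    by (subst set_integral_diff(2)) (auto intro!: set_integrable_cosh_sech)
  ultimately show ?thesis by simp
qed

definition hyp_coeff :: "real \<Rightarrow> nat \<Rightarrow> real" where
  "hyp_coeff \<mu> k = pochhammer 1 k * pochhammer (\<mu> + 1) k / (pochhammer (3/2) k * fact k)"

lemma hyp_coeff_Suc: "hyp_coeff \<mu> (Suc k) = hyp_coeff \<mu> k * ((\<mu> + real k + 1) / (real k + 3/2))"
proof -
  have "pochhammer (3/2) k > (0::real)" "(fact k :: real) > 0"
    "real k + 3/2 > 0" "3/2 + real k > 0" "real k + 1 > 0" "1 + real k > 0"
    by (auto intro: pochhammer_pos)
  then show ?thesis
    unfolding hyp_coeff_def pochhammer_Suc fact_Suc
    by (simp add: divide_simps) (simp add: algebra_simps)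
qed

lemma cosh_sech_integral_odd:
  assumes mu: "\<mu> > -1"
  shows "pochhammer (\<mu> + 1) (2 * k + 1) / fact (2 * k + 1) * cosh_sech_integral \<mu> (\<mu> + 2 * real k + 2)
         = 2 powr \<mu> * hyp_coeff \<mu> k"
proof (induction k)
  case 0
  then show ?case using cosh_sech_integral_base[OF mu] mu by (simp add: hyp_coeff_def)
next
  case (Suc k)
  define p where "p = \<mu> + 2 * real k + 2"
  define P where "P j = pochhammer (\<mu> + 1) (2 * j + 1) / fact (2 * j + 1)" for j
  have p: "p > \<bar>\<mu>\<bar>" using mu by (simp add: p_def)
  have P_Suc: "P (Suc k) = P k * (p * (p + 1)) / ((2 * real k + 2) * (2 * real k + 3))"
  proof -
    have "2 * Suc k + 1 = Suc (Suc (2 * k + 1))" by simp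
    then show ?thesis
      unfolding P_def p_def by (simp only:) (simp add: pochhammer_Suc field_simps)
  qed
  have "P (Suc k) * cosh_sech_integral \<mu> (p + 2)
      = P k / ((2 * real k + 2) * (2 * real k + 3)) * (p * (p + 1) * cosh_sech_integral \<mu> (p + 2))"
    unfolding P_Suc by simp
  also have "\<dots> = P k / ((2 * real k + 2) * (2 * real k + 3)) * ((p\<^sup>2 - \<mu>\<^sup>2) * cosh_sech_integral \<mu> p)"
    unfolding cosh_sech_integral_rec[OF p] ..
  also have "p\<^sup>2 - \<mu>\<^sup>2 = (2 * real k + 2) * (2 * (\<mu> + real k + 1))"
    by (simp add: p_def power2_eq_square algebra_simps)
  also have "P k / ((2 * real k + 2) * (2 * real k + 3)) * ((2 * real k + 2) * (2 * (\<mu> + real k + 1)) * cosh_sech_integral \<mu> p)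
      = P k * cosh_sech_integral \<mu> p * ((\<mu> + real k + 1) / (real k + 3/2))"
    by (simp add: divide_simps) (simp add: algebra_simps)
  also have "\<dots> = 2 powr \<mu> * hyp_coeff \<mu> (Suc k)"
    using Suc.IH by (simp add: P_def p_def hyp_coeff_Suc)
  finally show ?case
    by (simp add: P_def p_def algebra_simps)
qed

lemma hyp2F1_eq_suminf_hyp_coeff: "hyp2F1 1 (\<mu> + 1) (3/2) z = (\<Sum>j. hyp_coeff \<mu> j * z ^ j)"
  unfolding hyp2F1_def hyp_coeff_def by (simp add: field_simps)

definition vg_skew :: "real \<Rightarrow> real \<Rightarrow> real \<Rightarrow> real" where
  "vg_skew \<mu> \<alpha> \<beta> = Gamma (\<mu> + 1) / (sqrt pi * Gamma (\<mu> + 1/2)) * (\<beta> / \<alpha>)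
     * (1 - \<beta>\<^sup>2 / \<alpha>\<^sup>2) powr (\<mu> + 1/2) * hyp2F1 1 (\<mu> + 1) (3/2) (\<beta>\<^sup>2 / \<alpha>\<^sup>2)"

lemma vgP_eq_vg_skew: "vgP \<mu> \<alpha> \<beta> = 1/2 - vg_skew \<mu> \<alpha> \<beta>"
  unfolding vgP_def vg_skew_def by (simp add: mult_ac)

lemma vg_skew_uminus: "vg_skew \<mu> \<alpha> (- \<beta>) = - vg_skew \<mu> \<alpha> \<beta>"
  unfolding vg_skew_def by simp

definition binom_diff_coeff :: "real \<Rightarrow> real \<Rightarrow> nat \<Rightarrow> real" where
  "binom_diff_coeff \<mu> b n = pochhammer (\<mu> + 1) n / fact n * (b ^ n - (- b) ^ n)"

lemma binom_diff_coeff_nonneg: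
  assumes "\<mu> > -1" "b \<ge> 0"
  shows "binom_diff_coeff \<mu> b n \<ge> 0"
proof -
  have "(- b) ^ n \<le> b ^ n"
    using assms(2) by (cases "even n") (auto simp: power_minus_odd)
  then show ?thesis
    unfolding binom_diff_coeff_def using assms
    by (intro mult_nonneg_nonneg divide_nonneg_pos pochhammer_nonneg) auto
qed

lemma sums_powr_diff_binom:
  fixes y b \<mu> :: real
  assumes "0 \<le> b" "b < y"
  shows "(\<lambda>n. binom_diff_coeff \<mu> b n * y powr (- (\<mu> + 1) - real n))
           sums ((y - b) powr (- (\<mu> + 1)) - (y + b) powr (- (\<mu> + 1)))"
proof -
  define a where "a = - (\<mu> + 1)"
  have "(\<lambda>n. (a gchoose n) * (- b) ^ n * y powr (a - real n) - (a gchoose n) * b ^ n * y powr (a - real n))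
      sums ((- b + y) powr a - (b + y) powr a)"
    using assms by (intro sums_diff gen_binomial_real') auto
  moreover have "(a gchoose n) * (- b) ^ n * y powr (a - real n) - (a gchoose n) * b ^ n * y powr (a - real n)
      = binom_diff_coeff \<mu> b n * y powr (a - real n)" for n
  proof -
    have "a gchoose n = (- 1) ^ n * pochhammer (\<mu> + 1) n / fact n"
      unfolding gbinomial_pochhammer a_def by (simp add: add.commute)
    then have "(a gchoose n) * (- b) ^ n * y powr (a - real n) - (a gchoose n) * b ^ n * y powr (a - real n)
        = pochhammer (\<mu> + 1) n / fact n * ((- 1) ^ n * (- b) ^ n - (- 1) ^ n * b ^ n) * y powr (a - real n)"
      by (simp add: algebra_simps)
    moreover have "(- 1) ^ n * (- b) ^ n = (b ^ n :: real)" "(- 1) ^ n * b ^ n = ((- b) ^ n :: real)"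
      by (simp_all add: power_mult_distrib[symmetric])
    ultimately show ?thesis
      unfolding binom_diff_coeff_def by simp
  qed
  ultimately show ?thesis by (simp add: a_def add.commute)
qed

definition vg_kernel_term :: "real \<Rightarrow> real \<Rightarrow> real \<Rightarrow> nat \<Rightarrow> real" where
  "vg_kernel_term \<mu> \<alpha> b n =
     binom_diff_coeff \<mu> b n * \<alpha> powr (- (\<mu> + 1) - real n) * cosh_sech_integral \<mu> (\<mu> + 1 + real n)"

lemma vg_kernel_term_nonneg:
  assumes "\<mu> > -1" "\<alpha> > 0" "b \<ge> 0"
  shows "vg_kernel_term \<mu> \<alpha> b n \<ge> 0"
  unfolding vg_kernel_term_def using assms binom_diff_coeff_nonneg cosh_sech_integral_nonneg by simp

lemma vg_kernel_term_even: "even n \<Longrightarrow> vg_kernel_term \<mu> \<alpha> b n = 0"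
  unfolding vg_kernel_term_def binom_diff_coeff_def by simp

lemma vg_kernel_term_odd:
  assumes "\<mu> > -1"
  shows "vg_kernel_term \<mu> \<alpha> b (2 * k + 1)
         = 2 * b ^ (2 * k + 1) * (2 powr \<mu> * hyp_coeff \<mu> k) * \<alpha> powr (- (\<mu> + 2 * real k + 2))"
proof -
  have e1: "\<mu> + 1 + real (2 * k + 1) = \<mu> + 2 * real k + 2"
    and e2: "- (\<mu> + 1) - real (2 * k + 1) = - (\<mu> + 2 * real k + 2)"
    and e3: "b ^ (2 * k + 1) - (- b) ^ (2 * k + 1) = 2 * b ^ (2 * k + 1)"
    by (simp_all add: power_minus_odd)
  show ?thesis
    unfolding vg_kernel_term_def binom_diff_coeff_def e1 e2 e3 cosh_sech_integral_odd[OF assms, symmetric]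
    by (simp add: mult_ac)
qed

definition vg_kernel_term_density :: "real \<Rightarrow> real \<Rightarrow> real \<Rightarrow> nat \<Rightarrow> real \<Rightarrow> real" where
  "vg_kernel_term_density \<mu> \<alpha> b n t =
     indicator {0<..} t * cosh (\<mu> * t) * (binom_diff_coeff \<mu> b n * (\<alpha> * cosh t) powr (- (\<mu> + 1) - real n))"

lemma ennreal_vg_kernel_expansion:
  assumes mu: "\<mu> > -1/2" and al: "\<alpha> > 0" and b: "0 \<le> b" "b < \<alpha>"
  shows "ennreal (indicator {0<..} t * cosh (\<mu> * t) * (\<alpha> * cosh t + - b) powr (- (\<mu> + 1)))
      = ennreal (indicator {0<..} t * cosh (\<mu> * t) * (\<alpha> * cosh t + b) powr (- (\<mu> + 1)))
        + (\<Sum>n. ennreal (vg_kernel_term_density \<mu> \<alpha> b n t))"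
proof -
  define y where "y = \<alpha> * cosh t"
  have "\<alpha> \<le> y" unfolding y_def using al cosh_real_ge_1[of t] by simp
  then have y: "b < y" using b by linarith
  define w where "w = indicator {0<..} t * cosh (\<mu> * t)"
  have w: "w \<ge> 0" unfolding w_def by simp
  have s: "(\<lambda>n. vg_kernel_term_density \<mu> \<alpha> b n t) sums (w * ((y - b) powr (- (\<mu> + 1)) - (y + b) powr (- (\<mu> + 1))))"
    unfolding vg_kernel_term_density_def w_def[symmetric] y_def[symmetric] mult.assoc
    by (rule sums_mult[OF sums_powr_diff_binom[OF b(1) y]])
  have nn: "vg_kernel_term_density \<mu> \<alpha> b n t \<ge> 0" for n
    unfolding vg_kernel_term_density_def using binom_diff_coeff_nonneg[of \<mu> b n] mu b by simp
  have sum_T: "(\<Sum>n. ennreal (vg_kernel_term_density \<mu> \<alpha> b n t))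
      = ennreal (w * ((y - b) powr (- (\<mu> + 1)) - (y + b) powr (- (\<mu> + 1))))"
    using suminf_ennreal2[OF nn sums_summable[OF s]] sums_unique[OF s] by simp
  have "w * ((y - b) powr (- (\<mu> + 1)) - (y + b) powr (- (\<mu> + 1))) \<ge> 0"
    using sums_unique[OF s] suminf_nonneg[OF sums_summable[OF s] nn] by simp
  then have "ennreal (w * (y + b) powr (- (\<mu> + 1))) + (\<Sum>n. ennreal (vg_kernel_term_density \<mu> \<alpha> b n t))
      = ennreal (w * (y + b) powr (- (\<mu> + 1)) + w * ((y - b) powr (- (\<mu> + 1)) - (y + b) powr (- (\<mu> + 1))))"
    unfolding sum_T using w by (intro ennreal_plus[symmetric]) auto
  then show ?thesis by (simp add: w_def y_def algebra_simps)
qed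

lemma nn_integral_vg_kernel_term_density:
  assumes mu: "\<mu> > -1/2" and al: "\<alpha> > 0" and b: "0 \<le> b"
  shows "(\<integral>\<^sup>+t. ennreal (vg_kernel_term_density \<mu> \<alpha> b n t) \<partial>lborel) = ennreal (vg_kernel_term \<mu> \<alpha> b n)"
proof -
  define p where "p = \<mu> + 1 + real n"
  have p: "p > \<bar>\<mu>\<bar>" using mu by (simp add: p_def)
  define K where "K = binom_diff_coeff \<mu> b n * \<alpha> powr (- p)"
  have K: "K \<ge> 0" unfolding K_def using binom_diff_coeff_nonneg[of \<mu> b n] mu b by simp
  have "vg_kernel_term_density \<mu> \<alpha> b n t = K * (indicator {0<..} t * cosh_sech \<mu> p t)" for t
  proof -
    have "- (\<mu> + 1) - real n = - p" by (simp add: p_def)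
    moreover have "(\<alpha> * cosh t) powr (- p) = \<alpha> powr (- p) * cosh t powr (- p)"
      using al by (simp add: powr_mult)
    ultimately show ?thesis
      unfolding vg_kernel_term_density_def cosh_sech_def K_def by (simp add: mult_ac)
  qed
  then have "(\<integral>\<^sup>+t. ennreal (vg_kernel_term_density \<mu> \<alpha> b n t) \<partial>lborel) = ennreal K * ennreal (cosh_sech_integral \<mu> p)"
    by (simp add: ennreal_mult'[OF K] nn_integral_cmult nn_integral_cosh_sech[OF p])
  also have "\<dots> = ennreal (vg_kernel_term \<mu> \<alpha> b n)"
    using K by (simp add: ennreal_mult'[symmetric] vg_kernel_term_def K_def p_def)
  finally show ?thesis .
qed

lemma vg_kernel_integral_uminus:
  fixes \<mu> \<alpha> b :: real
  assumes "\<mu> > -1/2" "\<alpha> > 0" "0 \<le> b" "b < \<alpha>"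
  shows "vg_kernel_integral \<mu> \<alpha> (- b) = vg_kernel_integral \<mu> \<alpha> b + (\<Sum>n. ennreal (vg_kernel_term \<mu> \<alpha> b n))"
proof -
  have [measurable]: "vg_kernel_term_density \<mu> \<alpha> b n \<in> borel_measurable lborel" for n
    unfolding vg_kernel_term_density_def by measurable
  have "vg_kernel_integral \<mu> \<alpha> (- b)
      = (\<integral>\<^sup>+t. ennreal (indicator {0<..} t * cosh (\<mu> * t) * (\<alpha> * cosh t + b) powr (- (\<mu> + 1)))
           + (\<Sum>n. ennreal (vg_kernel_term_density \<mu> \<alpha> b n t)) \<partial>lborel)"
    unfolding vg_kernel_integral_def ennreal_vg_kernel_expansion[OF assms] by simp
  also have "\<dots> = vg_kernel_integral \<mu> \<alpha> b + (\<integral>\<^sup>+t. (\<Sum>n. ennreal (vg_kernel_term_density \<mu> \<alpha> b n t)) \<partial>lborel)"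
    unfolding vg_kernel_integral_def by (rule nn_integral_add) measurable
  also have "(\<integral>\<^sup>+t. (\<Sum>n. ennreal (vg_kernel_term_density \<mu> \<alpha> b n t)) \<partial>lborel)
      = (\<Sum>n. \<integral>\<^sup>+t. ennreal (vg_kernel_term_density \<mu> \<alpha> b n t) \<partial>lborel)"
    by (rule nn_integral_suminf) measurable
  finally show ?thesis
    using nn_integral_vg_kernel_term_density assms by simp
qed

lemma powr_diff_squares:
  fixes \<alpha> b e :: real
  assumes "\<alpha> > 0" "\<bar>b\<bar> \<le> \<alpha>"
  shows "(\<alpha>\<^sup>2 - b\<^sup>2) powr e = \<alpha> powr (2 * e) * (1 - b\<^sup>2 / \<alpha>\<^sup>2) powr e"
proof -
  have "b\<^sup>2 \<le> \<alpha>\<^sup>2" using assms by (metis abs_ge_zero power2_abs power_mono)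
  then have "0 \<le> 1 - b\<^sup>2 / \<alpha>\<^sup>2" using assms by (simp add: divide_le_eq)
  moreover have "\<alpha>\<^sup>2 - b\<^sup>2 = \<alpha> powr 2 * (1 - b\<^sup>2 / \<alpha>\<^sup>2)"
    using assms by (simp add: field_simps powr_realpow)
  ultimately show ?thesis using assms by (simp only: powr_mult powr_powr)
qed

lemma power_odd_mult_inverse:
  fixes \<alpha> b :: real
  shows "b ^ (2 * k + 1) * inverse (\<alpha> ^ (2 * k + 1)) = (b / \<alpha>) * (b\<^sup>2 / \<alpha>\<^sup>2) ^ k"
proof -
  have "(b / \<alpha>) ^ (2 * k + 1) = (b / \<alpha>) * ((b / \<alpha>) ^ 2) ^ k"
    by (simp add: power_mult)
  moreover have "(b / \<alpha>) ^ (2 * k + 1) = b ^ (2 * k + 1) * inverse (\<alpha> ^ (2 * k + 1))"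
    by (subst power_divide) (simp add: divide_inverse)
  ultimately show ?thesis by (simp only: power_divide)
qed

lemma vg_kernel_term_odd_scaled:
  fixes \<mu> \<alpha> b :: real
  assumes mu: "\<mu> > -1/2" and al: "\<alpha> > 0" and b: "0 \<le> b" "b < \<alpha>"
  shows "vg_const \<mu> \<alpha> b * Gamma (\<mu> + 1) * vg_kernel_term \<mu> \<alpha> b (2 * k + 1) / 2
       = Gamma (\<mu> + 1) / (sqrt pi * Gamma (\<mu> + 1/2)) * (b / \<alpha>) * (1 - b\<^sup>2 / \<alpha>\<^sup>2) powr (\<mu> + 1/2)
         * (hyp_coeff \<mu> k * (b\<^sup>2 / \<alpha>\<^sup>2) ^ k)"
proof -
  define z where "z = b\<^sup>2 / \<alpha>\<^sup>2"
  define e where "e = \<mu> + 1/2"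
  have h1: "(\<alpha>\<^sup>2 - b\<^sup>2) powr e = \<alpha> powr (2 * e) * (1 - z) powr e"
    unfolding z_def using al b by (intro powr_diff_squares) auto
  have h2: "(2 * \<alpha>) powr \<mu> = 2 powr \<mu> * \<alpha> powr \<mu>"
    using al by (simp add: powr_mult)
  have "\<alpha> powr (2 * e) * \<alpha> powr (- (\<mu> + 2 * real k + 2)) / \<alpha> powr \<mu>
      = \<alpha> powr (2 * e + (- (\<mu> + 2 * real k + 2)) - \<mu>)"
    by (simp only: powr_add[symmetric] powr_diff[symmetric])
  also have "2 * e + (- (\<mu> + 2 * real k + 2)) - \<mu> = - real (2 * k + 1)"
    by (simp add: e_def)
  finally have h3: "\<alpha> powr (2 * e) * \<alpha> powr (- (\<mu> + 2 * real k + 2)) / \<alpha> powr \<mu> = inverse (\<alpha> ^ (2 * k + 1))"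
    using al by (simp only: powr_minus powr_realpow[OF al])
  have mu1: "\<mu> > -1" using mu by simp
  have pos: "Gamma (\<mu> + 1/2) > 0" "sqrt pi > 0" "\<alpha> powr \<mu> > 0" "(2::real) powr \<mu> > 0"
    using mu al by (auto intro!: Gamma_real_pos)
  have "vg_const \<mu> \<alpha> b * Gamma (\<mu> + 1) * vg_kernel_term \<mu> \<alpha> b (2 * k + 1) / 2
      = Gamma (\<mu> + 1) / (sqrt pi * Gamma (\<mu> + 1/2)) * (1 - z) powr e * hyp_coeff \<mu> k
        * (b ^ (2 * k + 1) * (\<alpha> powr (2 * e) * \<alpha> powr (- (\<mu> + 2 * real k + 2)) / \<alpha> powr \<mu>))"
    unfolding vg_const_def vg_kernel_term_odd[OF mu1] h2 e_def[symmetric] h1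
    using mu pos by (simp add: field_simps)
  also have "\<dots> = Gamma (\<mu> + 1) / (sqrt pi * Gamma (\<mu> + 1/2)) * (b / \<alpha>) * (1 - z) powr e
        * (hyp_coeff \<mu> k * z ^ k)"
    unfolding h3 power_odd_mult_inverse z_def by (simp add: mult_ac)
  finally show ?thesis unfolding z_def e_def .
qed

lemma vg_kernel_series:
  fixes \<mu> \<alpha> b :: real
  assumes mu: "\<mu> > -1/2" and al: "\<alpha> > 0" and b: "0 \<le> b" "b < \<alpha>"
    and summable: "summable (vg_kernel_term \<mu> \<alpha> b)"
  shows "vg_const \<mu> \<alpha> b * Gamma (\<mu> + 1) * (\<Sum>n. vg_kernel_term \<mu> \<alpha> b n) / 2 = vg_skew \<mu> \<alpha> b"
proof -
  define S where "S = (\<Sum>n. vg_kernel_term \<mu> \<alpha> b n)"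
  define C where "C = vg_const \<mu> \<alpha> b * Gamma (\<mu> + 1)"
  define K where "K = Gamma (\<mu> + 1) / (sqrt pi * Gamma (\<mu> + 1/2)) * (b / \<alpha>) * (1 - b\<^sup>2 / \<alpha>\<^sup>2) powr (\<mu> + 1/2)"
  define z where "z = b\<^sup>2 / \<alpha>\<^sup>2"
  have "vg_kernel_term \<mu> \<alpha> b n = 0" if "n \<notin> range (\<lambda>k. 2 * k + 1)" for n
  proof -
    have "even n" using that by (metis oddE rangeI)
    then show ?thesis by (rule vg_kernel_term_even)
  qed
  then have "(\<lambda>k. vg_kernel_term \<mu> \<alpha> b (2 * k + 1)) sums S \<longleftrightarrow> vg_kernel_term \<mu> \<alpha> b sums S"
    by (intro sums_mono_reindex) (auto intro: strict_monoI)
  then have "(\<lambda>k. vg_kernel_term \<mu> \<alpha> b (2 * k + 1)) sums S"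
    using summable unfolding S_def by (simp add: summable_sums)
  then have "(\<lambda>k. C * vg_kernel_term \<mu> \<alpha> b (2 * k + 1) / 2) sums (C * S / 2)"
    by (intro sums_divide sums_mult)
  also have "(\<lambda>k. C * vg_kernel_term \<mu> \<alpha> b (2 * k + 1) / 2) = (\<lambda>k. K * (hyp_coeff \<mu> k * z ^ k))"
    unfolding C_def K_def z_def using vg_kernel_term_odd_scaled[OF mu al b] by simp
  finally have sums: "(\<lambda>k. K * (hyp_coeff \<mu> k * z ^ k)) sums (C * S / 2)" .
  have "C * S / 2 = K * hyp2F1 1 (\<mu> + 1) (3/2) z"
  proof (cases "K = 0")
    case True
    then show ?thesis using sums_unique[OF sums] by simp
  next
    case False
    then have "summable (\<lambda>k. hyp_coeff \<mu> k * z ^ k)"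
      using sums_summable[OF sums] summable_cmult_iff by blast
    then show ?thesis
      unfolding hyp2F1_eq_suminf_hyp_coeff using sums_unique[OF sums] suminf_mult by metis
  qed
  then show ?thesis unfolding C_def K_def z_def S_def vg_skew_def .
qed

lemma vg_kernel_integral_diff_nonneg:
  fixes \<mu> \<alpha> b :: real
  assumes mu: "\<mu> > -1/2" and al: "\<alpha> > 0" and b: "0 \<le> b" "b < \<alpha>"
    and fin: "vg_kernel_integral \<mu> \<alpha> (- b) \<noteq> \<top>"
  shows "vg_const \<mu> \<alpha> b * Gamma (\<mu> + 1)
           * (enn2real (vg_kernel_integral \<mu> \<alpha> (- b)) - enn2real (vg_kernel_integral \<mu> \<alpha> b)) / 2
         = vg_skew \<mu> \<alpha> b"
proof -
  note split = vg_kernel_integral_uminus[OF mu al b]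
  have nonneg: "vg_kernel_term \<mu> \<alpha> b n \<ge> 0" for n
    using vg_kernel_term_nonneg[of \<mu> \<alpha> b n] mu al b by simp
  have fin_b: "vg_kernel_integral \<mu> \<alpha> b \<noteq> \<top>" and fin_sum: "(\<Sum>n. ennreal (vg_kernel_term \<mu> \<alpha> b n)) \<noteq> \<top>"
    using fin unfolding split by auto
  have summable: "summable (vg_kernel_term \<mu> \<alpha> b)"
    using nonneg fin_sum by (rule summable_suminf_not_top)
  have "(\<Sum>n. ennreal (vg_kernel_term \<mu> \<alpha> b n)) = ennreal (\<Sum>n. vg_kernel_term \<mu> \<alpha> b n)"
    using nonneg summable by (rule suminf_ennreal2)
  moreover have "(\<Sum>n. vg_kernel_term \<mu> \<alpha> b n) \<ge> 0"
    using summable nonneg by (rule suminf_nonneg)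
  ultimately have "enn2real (vg_kernel_integral \<mu> \<alpha> (- b))
      = enn2real (vg_kernel_integral \<mu> \<alpha> b) + (\<Sum>n. vg_kernel_term \<mu> \<alpha> b n)"
    unfolding split using fin_b by (subst enn2real_plus) (auto simp: less_top[symmetric])
  then show ?thesis using vg_kernel_series[OF mu al b summable] by simp
qed

lemma vg_kernel_integral_diff:
  fixes \<mu> \<alpha> \<beta> :: real
  assumes mu: "\<mu> > -1/2" and al: "\<alpha> > 0" and be: "\<bar>\<beta>\<bar> < \<alpha>"
    and fin: "vg_kernel_integral \<mu> \<alpha> \<beta> \<noteq> \<top>" "vg_kernel_integral \<mu> \<alpha> (- \<beta>) \<noteq> \<top>"
  shows "vg_const \<mu> \<alpha> \<beta> * Gamma (\<mu> + 1)
           * (enn2real (vg_kernel_integral \<mu> \<alpha> (- \<beta>)) - enn2real (vg_kernel_integral \<mu> \<alpha> \<beta>)) / 2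
         = vg_skew \<mu> \<alpha> \<beta>"
proof (cases "\<beta> \<ge> 0")
  case True
  then show ?thesis using vg_kernel_integral_diff_nonneg[OF mu al _ _ fin(2)] be by simp
next
  case False
  then have "vg_const \<mu> \<alpha> (- \<beta>) * Gamma (\<mu> + 1)
      * (enn2real (vg_kernel_integral \<mu> \<alpha> \<beta>) - enn2real (vg_kernel_integral \<mu> \<alpha> (- \<beta>))) / 2
      = vg_skew \<mu> \<alpha> (- \<beta>)"
    using vg_kernel_integral_diff_nonneg[of \<mu> \<alpha> "- \<beta>"] mu al be fin(1) by simp
  then show ?thesis
    unfolding vg_const_uminus vg_skew_uminus by (simp add: algebra_simps)
qed

lemma (in prob_space) prob_nonpos_add_prob_nonneg:
  fixes Z :: "'a \<Rightarrow> real"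
  assumes [measurable]: "Z \<in> borel_measurable M"
  shows "prob {\<omega> \<in> space M. Z \<omega> \<le> 0} + prob {\<omega> \<in> space M. Z \<omega> \<ge> 0} = 1 + prob {\<omega> \<in> space M. Z \<omega> = 0}"
proof -
  have "prob ({\<omega> \<in> space M. Z \<omega> \<le> 0} \<union> {\<omega> \<in> space M. Z \<omega> \<ge> 0})
      = prob {\<omega> \<in> space M. Z \<omega> \<le> 0} + prob {\<omega> \<in> space M. Z \<omega> \<ge> 0}
        - prob ({\<omega> \<in> space M. Z \<omega> \<le> 0} \<inter> {\<omega> \<in> space M. Z \<omega> \<ge> 0})"
    by (rule measure_Un3) (auto simp: fmeasurable_eq_sets)
  moreover have "{\<omega> \<in> space M. Z \<omega> \<le> 0} \<union> {\<omega> \<in> space M. Z \<omega> \<ge> 0} = space M" by auto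
  moreover have "{\<omega> \<in> space M. Z \<omega> \<le> 0} \<inter> {\<omega> \<in> space M. Z \<omega> \<ge> 0} = {\<omega> \<in> space M. Z \<omega> = 0}"
    by auto
  ultimately show ?thesis using prob_space by simp
qed

lemma (in prob_space) distributed_lborel_prob_eq_0:
  assumes "distributed M lborel X f"
  shows "prob {\<omega> \<in> space M. X \<omega> = c} = 0"
proof -
  have "emeasure M (X -` {c} \<inter> space M) = (\<integral>\<^sup>+x. f x * indicator {c} x \<partial>lborel)"
    using assms by (rule distributed_emeasure) simp
  also have "\<dots> = 0"
  proof (subst nn_integral_0_iff_AE)
    show "(\<lambda>x. f x * indicator {c} x) \<in> borel_measurable lborel"
      using distributed_borel_measurable[OF assms] by measurable
    show "AE x in lborel. f x * indicator {c} x = 0"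
      using AE_lborel_singleton[of c] by eventually_elim (simp add: indicator_def)
  qed
  finally show ?thesis
    by (simp add: measure_def vimage_def Int_def conj_commute)
qed

lemma prob_vg_nonpos:
  fixes M :: "'a measure" and X :: "'a \<Rightarrow> real" and \<mu> \<alpha> \<beta> :: real
  assumes "prob_space M" and mu: "\<mu> > -1/2" and al: "\<alpha> > 0" and be: "\<bar>\<beta>\<bar> < \<alpha>"
    and distr: "distributed M lborel X (\<lambda>x. ennreal (vg_pdf \<mu> \<alpha> \<beta> x))"
  shows "measure M {\<omega> \<in> space M. X \<omega> \<le> 0} = vgP \<mu> \<alpha> \<beta>"
proof -
  interpret prob_space M by fact
  have X_measurable[measurable]: "X \<in> borel_measurable M"
    using distributed_measurable[OF distr] by simp
  define c where "c = vg_const \<mu> \<alpha> \<beta> * Gamma (\<mu> + 1)"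
  have c: "c > 0" unfolding c_def using vg_const_pos[OF mu al be] mu by (simp add: Gamma_real_pos)
  have half: "emeasure M {\<omega> \<in> space M. X \<omega> \<in> A} = (\<integral>\<^sup>+x. ennreal (vg_pdf \<mu> \<alpha> \<beta> x) * indicator A x \<partial>lborel)"
    if "A \<in> sets borel" for A
    using distributed_emeasure[OF distr, of A] that by (simp add: vimage_def Int_def conj_commute)
  have "emeasure M {\<omega> \<in> space M. X \<omega> \<le> 0} = ennreal c * vg_kernel_integral \<mu> \<alpha> \<beta>"
    using half[of "{..0}"] nn_integral_vg_pdf_nonpos[OF mu al be] by (simp add: c_def)
  then have nonpos: "prob {\<omega> \<in> space M. X \<omega> \<le> 0} = c * enn2real (vg_kernel_integral \<mu> \<alpha> \<beta>)"
    and fin1: "vg_kernel_integral \<mu> \<alpha> \<beta> \<noteq> \<top>"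
    using c emeasure_finite[of "{\<omega> \<in> space M. X \<omega> \<le> 0}"]
    by (auto simp: measure_def enn2real_mult ennreal_mult_eq_top_iff)
  have "emeasure M {\<omega> \<in> space M. X \<omega> \<ge> 0} = ennreal c * vg_kernel_integral \<mu> \<alpha> (- \<beta>)"
    using half[of "{0..}"] nn_integral_vg_pdf_nonneg[OF mu al be] by (simp add: c_def)
  then have nonneg: "prob {\<omega> \<in> space M. X \<omega> \<ge> 0} = c * enn2real (vg_kernel_integral \<mu> \<alpha> (- \<beta>))"
    and fin2: "vg_kernel_integral \<mu> \<alpha> (- \<beta>) \<noteq> \<top>"
    using c emeasure_finite[of "{\<omega> \<in> space M. X \<omega> \<ge> 0}"]
    by (auto simp: measure_def enn2real_mult ennreal_mult_eq_top_iff)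
  have "prob {\<omega> \<in> space M. X \<omega> \<le> 0} + prob {\<omega> \<in> space M. X \<omega> \<ge> 0} = 1"
    using prob_nonpos_add_prob_nonneg[OF X_measurable] distributed_lborel_prob_eq_0[OF distr] by simp
  moreover have "c * (enn2real (vg_kernel_integral \<mu> \<alpha> (- \<beta>)) - enn2real (vg_kernel_integral \<mu> \<alpha> \<beta>)) / 2
      = vg_skew \<mu> \<alpha> \<beta>"
    unfolding c_def using vg_kernel_integral_diff[OF mu al be fin1 fin2] by simp
  ultimately show ?thesis
    unfolding vgP_eq_vg_skew nonpos nonneg by (simp add: algebra_simps)
qed

lemma (in prob_space) prob_mult_nonpos_indep:
  fixes X Y :: "'a \<Rightarrow> real"
  assumes [measurable]: "X \<in> borel_measurable M" "Y \<in> borel_measurable M"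
    and indep: "indep_var borel X borel Y"
    and X0: "prob {\<omega> \<in> space M. X \<omega> = 0} = 0" and Y0: "prob {\<omega> \<in> space M. Y \<omega> = 0} = 0"
  shows "prob {\<omega> \<in> space M. X \<omega> * Y \<omega> \<le> 0}
         = prob {\<omega> \<in> space M. X \<omega> \<le> 0} * (1 - prob {\<omega> \<in> space M. Y \<omega> \<le> 0})
           + (1 - prob {\<omega> \<in> space M. X \<omega> \<le> 0}) * prob {\<omega> \<in> space M. Y \<omega> \<le> 0}"
proof -
  have indep_prob: "prob {\<omega> \<in> space M. X \<omega> \<in> A \<and> Y \<omega> \<in> B}
      = prob {\<omega> \<in> space M. X \<omega> \<in> A} * prob {\<omega> \<in> space M. Y \<omega> \<in> B}"
    if "A \<in> sets borel" "B \<in> sets borel" for A B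
    using indep_varD[OF indep that] by (simp add: vimage_def Int_def conj_commute)
  define E1 where "E1 = {\<omega> \<in> space M. X \<omega> \<le> 0 \<and> Y \<omega> \<ge> 0}"
  define E2 where "E2 = {\<omega> \<in> space M. X \<omega> \<ge> 0 \<and> Y \<omega> \<le> 0}"
  have "prob E1 = prob {\<omega> \<in> space M. X \<omega> \<le> 0} * (1 - prob {\<omega> \<in> space M. Y \<omega> \<le> 0})"
    using indep_prob[of "{..0}" "{0..}"] prob_nonpos_add_prob_nonneg[of Y] Y0 unfolding E1_def by simp
  moreover have "prob E2 = (1 - prob {\<omega> \<in> space M. X \<omega> \<le> 0}) * prob {\<omega> \<in> space M. Y \<omega> \<le> 0}"
    using indep_prob[of "{0..}" "{..0}"] prob_nonpos_add_prob_nonneg[of X] X0 unfolding E2_def by simp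
  moreover have "prob (E1 \<inter> E2) = 0"
  proof -
    have "prob (E1 \<inter> E2) \<le> prob {\<omega> \<in> space M. X \<omega> = 0}"
      by (rule finite_measure_mono) (auto simp: E1_def E2_def)
    then show ?thesis using X0 measure_nonneg[of M "E1 \<inter> E2"] by simp
  qed
  moreover have "{\<omega> \<in> space M. X \<omega> * Y \<omega> \<le> 0} = E1 \<union> E2"
    unfolding E1_def E2_def by (auto simp: mult_le_0_iff)
  moreover have "prob (E1 \<union> E2) = prob E1 + prob E2 - prob (E1 \<inter> E2)"
    by (rule measure_Un3) (auto simp: fmeasurable_eq_sets E1_def E2_def)
  ultimately show ?thesis by simp
qed

theorem mainTheorem5:
  fixes M :: "'a measure" and X Y :: "'a \<Rightarrow> real"
    and m n \<alpha>1 \<alpha>2 \<beta>1 \<beta>2 :: real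
  assumes "prob_space M"
    and "m > -1/2" and "n > -1/2"
    and "\<alpha>1 > 0" and "\<alpha>2 > 0"
    and "\<bar>\<beta>1\<bar> < \<alpha>1" and "\<bar>\<beta>2\<bar> < \<alpha>2"
    and "distributed M lborel X (\<lambda>x. ennreal (vg_pdf m \<alpha>1 \<beta>1 x))"
    and "distributed M lborel Y (\<lambda>y. ennreal (vg_pdf n \<alpha>2 \<beta>2 y))"
    and "prob_space.indep_var M borel X borel Y"
  shows "measure M {\<omega> \<in> space M. X \<omega> * Y \<omega> \<le> 0}
         = vgP m \<alpha>1 \<beta>1 + vgP n \<alpha>2 \<beta>2 - 2 * vgP m \<alpha>1 \<beta>1 * vgP n \<alpha>2 \<beta>2"
proof -
  interpret prob_space M by fact
  have "X \<in> borel_measurable M" "Y \<in> borel_measurable M"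
    using distributed_measurable[OF assms(8)] distributed_measurable[OF assms(9)] by simp_all
  moreover have "prob {\<omega> \<in> space M. X \<omega> = 0} = 0" "prob {\<omega> \<in> space M. Y \<omega> = 0} = 0"
    using distributed_lborel_prob_eq_0[OF assms(8)] distributed_lborel_prob_eq_0[OF assms(9)] by simp_all
  moreover have "prob {\<omega> \<in> space M. X \<omega> \<le> 0} = vgP m \<alpha>1 \<beta>1"
    by (rule prob_vg_nonpos) (use assms in auto)
  moreover have "prob {\<omega> \<in> space M. Y \<omega> \<le> 0} = vgP n \<alpha>2 \<beta>2"
    by (rule prob_vg_nonpos) (use assms in auto)
  ultimately show ?thesis
    using prob_mult_nonpos_indep[OF _ _ assms(10)] by (simp add: algebra_simps)
qed

end
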